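(* Let $n\ge 2$ and let $A\in\mathbb{R}^{n\times n}$ be the tridiagonal Toeplitz matrix with all diagonal entries equal to $b\ge 0$, all subdiagonal entries ($A_{i+1,i}$) equal to $a\ge 0$, all superdiagonal entries ($A_{i,i+1}$) equal to $c\ge0$, and all other entries zero, where $\max(a,c)>0$. Let $r(t):=r\big((1-t)A+tA^{\top}\big)$. Then on $t\in(0,1)$, $r(t)$ is concave in $t$, nondecreasing on $(0,1/2)$ and nonincreasing on $(1/2,1)$; moreover, when $a\neq c$, $r$ is strictly concave on $(0,1)$, strictly increasing on $(0,1/2)$, and strictly decreasing on $(1/2,1)$.
   Context: $r(M)$ denotes the spectral radius of a square matrix $M$. *)

theory Defs
  imports "HOL-Analysis.Convex" "Jordan_Normal_Form.Spectral_Radius"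
begin

definition tridiag_toeplitz :: "nat \<Rightarrow> real \<Rightarrow> real \<Rightarrow> real \<Rightarrow> real mat" where
  "tridiag_toeplitz n a b c = mat n n (\<lambda>(i, j).
     if i = j then b else if i = j + 1 then a else if j = i + 1 then c else 0)"

definition real_spectral_radius :: "real mat \<Rightarrow> real" where
  "real_spectral_radius M = spectral_radius (map_mat complex_of_real M)"

definition strictly_concave_on :: "real set \<Rightarrow> (real \<Rightarrow> real) \<Rightarrow> bool" where
  "strictly_concave_on S f \<longleftrightarrow> convex S \<and>
     (\<forall>x\<in>S. \<forall>y\<in>S. x \<noteq> y \<longrightarrow> (\<forall>u. 0 < u \<and> u < 1 \<longrightarrow>
        f ((1 - u) * x + u * y) > (1 - u) * f x + u * f y))"

end

theory Submission
  imports Defs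
begin

text \<open>
  The matrix \<open>(1 - t) A + t A\<^sup>T\<close> is again tridiagonal Toeplitz, with off-diagonal entries
  \<open>p(t) = (1 - t) a + t c\<close> and \<open>q(t) = (1 - t) c + t a\<close>. For \<open>p, q > 0\<close> its eigenvalues are
  \<open>b + 2 sqrt(p q) cos(k \<pi> / (n + 1))\<close>, \<open>k = 1, \<dots>, n\<close>, with eigenvectors
  \<open>(sqrt(p/q)^j sin((j + 1) k \<pi> / (n + 1)))\<^sub>j\<close>; hence
  \<open>r(t) = b + 2 cos(\<pi> / (n + 1)) sqrt(p(t) q(t))\<close> on \<open>(0, 1)\<close>. The geometric mean of two
  nonnegative affine functions is concave, and strictly so unless they are proportional, which for
  \<open>p\<close> and \<open>q\<close> happens exactly when \<open>a = c\<close>. Finally \<open>r(1 - t) = r(t)\<close>, and a (strictly)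
  concave function symmetric about \<open>1/2\<close> is (strictly) monotone on either side of \<open>1/2\<close>.
\<close>

section \<open>Spectrum of tridiagonal Toeplitz matrices\<close>

definition tridiag_eigenvalue :: "nat \<Rightarrow> real \<Rightarrow> real \<Rightarrow> real \<Rightarrow> nat \<Rightarrow> real" where
  "tridiag_eigenvalue n a b c k = b + 2 * sqrt (a * c) * cos (real k * pi / real (n + 1))"

definition tridiag_eigenvector :: "nat \<Rightarrow> real \<Rightarrow> real \<Rightarrow> nat \<Rightarrow> real vec" where
  "tridiag_eigenvector n a c k =
     vec n (\<lambda>j. sqrt (a / c) ^ j * sin (real (j + 1) * (real k * pi / real (n + 1))))"

lemma dim_tridiag_toeplitz [simp]:
  "dim_row (tridiag_toeplitz n a b c) = n" "dim_col (tridiag_toeplitz n a b c) = n"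
  by (simp_all add: tridiag_toeplitz_def)

lemma tridiag_toeplitz_carrier_mat [simp]: "tridiag_toeplitz n a b c \<in> carrier_mat n n"
  by (simp add: carrier_matI)

lemma tridiag_toeplitz_mult_vec_nth:
  assumes "i < n" and "v \<in> carrier_vec n"
  shows "(tridiag_toeplitz n a b c *\<^sub>v v) $ i =
    b * v $ i + (if 0 < i then a * v $ (i - 1) else 0) + (if i + 1 < n then c * v $ (i + 1) else 0)"
proof -
  have "(tridiag_toeplitz n a b c *\<^sub>v v) $ i =
      (\<Sum>j<n. (if i = j then b else if i = j + 1 then a else if j = i + 1 then c else 0) * v $ j)"
    using assms by (simp add: tridiag_toeplitz_def scalar_prod_def lessThan_atLeast0)
  also have "\<dots> = (\<Sum>j<n. (if j = i then b * v $ j else 0)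
        + (if 0 < i \<and> j = i - 1 then a * v $ j else 0) + (if j = i + 1 then c * v $ j else 0))"
    by (rule sum.cong) auto
  also have "\<dots> = b * v $ i + (if 0 < i then a * v $ (i - 1) else 0)
        + (if i + 1 < n then c * v $ (i + 1) else 0)"
    using assms by (simp add: sum.distrib)
  finally show ?thesis .
qed

lemma tridiag_eigenvector_equation:
  fixes a c \<theta> :: real and i n :: nat
  assumes "a > 0" and "c > 0" and "i < n" and "sin (real (n + 1) * \<theta>) = 0"
  defines "x \<equiv> \<lambda>j::nat. sqrt (a / c) ^ j * sin (real (j + 1) * \<theta>)"
  shows "b * x i + (if 0 < i then a * x (i - 1) else 0) + (if i + 1 < n then c * x (i + 1) else 0)
    = (b + 2 * sqrt (a * c) * cos \<theta>) * x i"
  \<comment> \<open>The omitted boundary terms would be \<open>x (-1)\<close>, containing \<open>sin 0\<close>, and \<open>x n\<close>,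
    containing \<open>sin ((n + 1) \<theta>) = 0\<close>.\<close>
proof -
  define s where "s = sqrt (a * c)"
  define \<rho> where "\<rho> = sqrt (a / c)"
  have a_eq: "a = s * \<rho>"
    using assms(1,2) by (simp add: s_def \<rho>_def real_sqrt_mult[symmetric] real_sqrt_mult_self)
  have "\<rho> > 0" "\<rho> * \<rho> = a / c"
    using assms(1,2) by (simp_all add: \<rho>_def)
  then have "(c * \<rho>) * \<rho> = s * \<rho>"
    using a_eq assms(2) by (simp add: mult.assoc)
  then have c_eq: "c * \<rho> = s"
    using \<open>\<rho> > 0\<close> by simp
  have x_eq: "x j = \<rho> ^ j * sin (real (j + 1) * \<theta>)" for j
    by (simp add: x_def \<rho>_def)
  have left: "(if 0 < i then a * x (i - 1) else 0) = s * \<rho> ^ i * sin (real i * \<theta>)"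
    by (cases i) (simp_all add: x_eq a_eq)
  have right: "(if i + 1 < n then c * x (i + 1) else 0) = s * \<rho> ^ i * sin (real (i + 2) * \<theta>)"
  proof (cases "i + 1 < n")
    case True
    then show ?thesis by (simp add: x_eq c_eq[symmetric] algebra_simps)
  next
    case False
    then have "i + 2 = n + 1" using assms(3) by simp
    then have "sin (real (i + 2) * \<theta>) = 0" by (simp only: assms(4))
    with False show ?thesis by simp
  qed
  have "real i * \<theta> = real (i + 1) * \<theta> - \<theta>" "real (i + 2) * \<theta> = real (i + 1) * \<theta> + \<theta>"
    by (simp_all add: algebra_simps)
  then have sum_to_product:
    "sin (real i * \<theta>) + sin (real (i + 2) * \<theta>) = 2 * sin (real (i + 1) * \<theta>) * cos \<theta>"
    by (simp only: sin_add sin_diff)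
  have "s * \<rho> ^ i * sin (real i * \<theta>) + s * \<rho> ^ i * sin (real (i + 2) * \<theta>)
      = s * \<rho> ^ i * (sin (real i * \<theta>) + sin (real (i + 2) * \<theta>))"
    by (simp only: distrib_left)
  also have "\<dots> = 2 * s * cos \<theta> * x i"
    unfolding sum_to_product x_eq by (simp only: mult_ac)
  finally show ?thesis
    unfolding left right s_def[symmetric] by (simp add: distrib_right)
qed

lemma tridiag_toeplitz_eigenvector:
  assumes "a > 0" and "c > 0" and k: "k \<in> {1..n}"
  shows "eigenvector (tridiag_toeplitz n a b c) (tridiag_eigenvector n a c k)
           (tridiag_eigenvalue n a b c k)"
proof -
  define \<theta> where "\<theta> = real k * pi / real (n + 1)"
  define x where "x = (\<lambda>j::nat. sqrt (a / c) ^ j * sin (real (j + 1) * \<theta>))"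
  define v where "v = tridiag_eigenvector n a c k"
  have v: "v \<in> carrier_vec n" by (simp add: v_def tridiag_eigenvector_def)
  have v_nth: "v $ j = x j" if "j < n" for j
    using that by (simp add: v_def tridiag_eigenvector_def x_def \<theta>_def)
  have "real k * pi < real (n + 1) * pi" using k by (intro mult_strict_right_mono) auto
  then have "0 < \<theta>" "\<theta> < pi"
    using k by (auto simp: \<theta>_def divide_less_eq)
  then have "v $ 0 \<noteq> 0"
    using k sin_gt_zero[of \<theta>] by (simp add: v_nth x_def)
  then have "v \<noteq> 0\<^sub>v n" using k by auto
  have eigenvalue_eq: "tridiag_eigenvalue n a b c k = b + 2 * sqrt (a * c) * cos \<theta>"
    by (simp add: tridiag_eigenvalue_def \<theta>_def)
  have sin_node: "sin (real (n + 1) * \<theta>) = 0"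
    by (simp add: \<theta>_def sin_zero_iff_int2)
  have "(tridiag_toeplitz n a b c *\<^sub>v v) $ i = (tridiag_eigenvalue n a b c k \<cdot>\<^sub>v v) $ i"
    if i: "i < n" for i
  proof -
    have "(tridiag_toeplitz n a b c *\<^sub>v v) $ i
        = b * x i + (if 0 < i then a * x (i - 1) else 0) + (if i + 1 < n then c * x (i + 1) else 0)"
      using i by (simp only: tridiag_toeplitz_mult_vec_nth[OF i v]) (simp add: v_nth)
    also have "\<dots> = tridiag_eigenvalue n a b c k * x i"
      unfolding x_def eigenvalue_eq by (rule tridiag_eigenvector_equation[OF assms(1,2) i sin_node])
    finally show ?thesis using i v by (simp add: v_nth)
  qed
  then have "tridiag_toeplitz n a b c *\<^sub>v v = tridiag_eigenvalue n a b c k \<cdot>\<^sub>v v"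
    using v by (intro eq_vecI) auto
  with v \<open>v \<noteq> 0\<^sub>v n\<close> show ?thesis by (simp add: eigenvector_def v_def)
qed

lemma spectrum_tridiag_toeplitz:
  assumes "a > 0" and "c > 0"
  shows "spectrum (map_mat complex_of_real (tridiag_toeplitz n a b c))
           = (\<lambda>k. complex_of_real (tridiag_eigenvalue n a b c k)) ` {1..n}"
    (is "spectrum ?M = ?S")
proof -
  have M: "?M \<in> carrier_mat n n" by simp
  have sub: "?S \<subseteq> spectrum ?M"
  proof
    fix z assume "z \<in> ?S"
    then obtain k where k: "k \<in> {1..n}" and z: "z = complex_of_real (tridiag_eigenvalue n a b c k)"
      by blast
    have "eigenvalue (tridiag_toeplitz n a b c) (tridiag_eigenvalue n a b c k)"
      using tridiag_toeplitz_eigenvector[OF assms k] by (auto simp: eigenvalue_def)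
    then show "z \<in> spectrum ?M"
      using of_real_hom.eigenvalue_hom[OF tridiag_toeplitz_carrier_mat] by (simp add: z spectrum_def)
  qed
  have "inj_on (\<lambda>k. complex_of_real (tridiag_eigenvalue n a b c k)) {1..n}"
  proof (rule inj_onI)
    have angle_range: "real j * pi / real (n + 1) \<in> {0..pi}" if "j \<in> {1..n}" for j
    proof -
      have "real j * pi / real (n + 1) \<le> real (n + 1) * pi / real (n + 1)"
        using that by (intro divide_right_mono mult_right_mono) auto
      then show ?thesis by simp
    qed
    fix k l assume k: "k \<in> {1..n}" and l: "l \<in> {1..n}"
      and "complex_of_real (tridiag_eigenvalue n a b c k)
        = complex_of_real (tridiag_eigenvalue n a b c l)"
    then have "sqrt (a * c) * cos (real k * pi / real (n + 1))
        = sqrt (a * c) * cos (real l * pi / real (n + 1))"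
      by (simp add: tridiag_eigenvalue_def)
    then have "cos (real k * pi / real (n + 1)) = cos (real l * pi / real (n + 1))"
      using assms by simp
    then have "real k * pi / real (n + 1) = real l * pi / real (n + 1)"
      using angle_range[OF k] angle_range[OF l] by (meson atLeastAtMost_iff cos_inj_pi)
    then show "k = l" by simp
  qed
  \<comment> \<open>\<open>n\<close> distinct eigenvalues of an \<open>n \<times> n\<close> matrix exhaust its spectrum.\<close>
  then have card_S: "card ?S = n"
    by (simp add: card_image)
  have "card ?S \<le> card (spectrum ?M)"
    using card_finite_spectrum(1)[OF M] sub by (rule card_mono)
  then have "card ?S = card (spectrum ?M)"
    using card_finite_spectrum(2)[OF M] card_S by linarith
  then show ?thesis
    using card_subset_eq[OF card_finite_spectrum(1)[OF M] sub] by simp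
qed

lemma abs_cos_le_cos:
  fixes x y :: real
  assumes "0 \<le> y" and "y \<le> x" and "x \<le> pi - y"
  shows "\<bar>cos x\<bar> \<le> cos y"
proof -
  have "cos x \<le> cos y"
    using assms by (intro cos_monotone_0_pi_le) auto
  moreover have "- cos x \<le> cos y"
    using assms cos_monotone_0_pi_le[of y "pi - x"] by simp
  ultimately show ?thesis by linarith
qed

lemma cos_pi_div_Suc_nonneg:
  assumes "n \<ge> 1"
  shows "cos (pi / real (n + 1)) \<ge> 0"
proof (rule cos_ge_zero)
  have "pi / real (n + 1) \<le> pi / 2"
    using assms by (intro divide_left_mono) auto
  then show "pi / real (n + 1) \<le> pi / 2" "- (pi / 2) \<le> pi / real (n + 1)"
    by (simp_all add: less_imp_le[OF less_le_trans[OF _ divide_nonneg_pos]])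
qed

lemma cos_pi_div_Suc_pos:
  assumes "n \<ge> 2"
  shows "cos (pi / real (n + 1)) > 0"
proof (rule cos_gt_zero_pi)
  show "pi / real (n + 1) < pi / 2"
    using assms by (intro divide_strict_left_mono) auto
  show "- (pi / 2) < pi / real (n + 1)"
    by (simp add: less_trans[OF _ divide_pos_pos])
qed

lemma real_spectral_radius_tridiag_toeplitz:
  assumes "n \<ge> 1" and "a > 0" and "b \<ge> 0" and "c > 0"
  shows "real_spectral_radius (tridiag_toeplitz n a b c) = tridiag_eigenvalue n a b c 1"
proof -
  let ?ev = "tridiag_eigenvalue n a b c"
  have "real_spectral_radius (tridiag_toeplitz n a b c) = Max ((\<lambda>k. \<bar>?ev k\<bar>) ` {1..n})"
    using assms by (simp add: real_spectral_radius_def spectral_radius_def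
        spectrum_tridiag_toeplitz image_image)
  also have "\<dots> = ?ev 1"
  proof (rule Max_eqI)
    fix y assume "y \<in> (\<lambda>k. \<bar>?ev k\<bar>) ` {1..n}"
    then obtain k where k: "k \<in> {1..n}" and y: "y = \<bar>?ev k\<bar>" by auto
    have "1 * pi \<le> real k * pi" "real k * pi \<le> real n * pi"
      using k by (intro mult_right_mono; simp)+
    then have "pi / real (n + 1) \<le> real k * pi / real (n + 1)"
      "real k * pi / real (n + 1) \<le> real n * pi / real (n + 1)"
      by (simp_all add: divide_right_mono)
    moreover have "real n * pi / real (n + 1) = pi - pi / real (n + 1)"
      by (simp add: field_simps)
    ultimately have "\<bar>cos (real k * pi / real (n + 1))\<bar> \<le> cos (pi / real (n + 1))"
      by (intro abs_cos_le_cos) auto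
    then have cos_le: "2 * sqrt (a * c) * \<bar>cos (real k * pi / real (n + 1))\<bar>
        \<le> 2 * sqrt (a * c) * cos (pi / real (n + 1))"
      using assms by (intro mult_left_mono) auto
    have "\<bar>?ev k\<bar> \<le> \<bar>b\<bar> + \<bar>2 * sqrt (a * c) * cos (real k * pi / real (n + 1))\<bar>"
      unfolding tridiag_eigenvalue_def by (rule abs_triangle_ineq)
    also have "\<dots> = b + 2 * sqrt (a * c) * \<bar>cos (real k * pi / real (n + 1))\<bar>"
      using assms by (simp add: abs_mult)
    also have "\<dots> \<le> ?ev 1"
      using cos_le by (simp add: tridiag_eigenvalue_def)
    finally show "y \<le> ?ev 1" by (simp add: y)
  next
    have "?ev 1 \<ge> 0"
      using assms cos_pi_div_Suc_nonneg[OF assms(1)] by (simp add: tridiag_eigenvalue_def)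
    then show "?ev 1 \<in> (\<lambda>k. \<bar>?ev k\<bar>) ` {1..n}"
      using assms(1) by force
  qed simp
  finally show ?thesis .
qed

lemma convex_comb_transpose_tridiag_toeplitz:
  "(1 - t) \<cdot>\<^sub>m tridiag_toeplitz n a b c + t \<cdot>\<^sub>m (tridiag_toeplitz n a b c)\<^sup>T
     = tridiag_toeplitz n (a + (c - a) * t) b (c + (a - c) * t)"
  by (rule eq_matI) (auto simp: tridiag_toeplitz_def algebra_simps)

lemma convex_comb_pos:
  fixes a c t :: real
  assumes "a \<ge> 0" and "c \<ge> 0" and "a + c > 0" and "t \<in> {0<..<1}"
  shows "a + (c - a) * t > 0"
proof -
  have "a + (c - a) * t = (1 - t) * a + t * c"
    by (simp add: algebra_simps)
  then show ?thesis
    using assms by (cases "a > 0"; simp add: add_pos_nonneg add_nonneg_pos)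
qed

lemma real_spectral_radius_convex_comb_transpose:
  assumes "n \<ge> 1" and "a \<ge> 0" and "b \<ge> 0" and "c \<ge> 0" and "a + c > 0" and "t \<in> {0<..<1}"
  shows "real_spectral_radius
           ((1 - t) \<cdot>\<^sub>m tridiag_toeplitz n a b c + t \<cdot>\<^sub>m (tridiag_toeplitz n a b c)\<^sup>T)
         = b + 2 * cos (pi / real (n + 1)) * sqrt ((a + (c - a) * t) * (c + (a - c) * t))"
  using assms convex_comb_pos[of a c t] convex_comb_pos[of c a t]
  by (simp add: convex_comb_transpose_tridiag_toeplitz real_spectral_radius_tridiag_toeplitz
      tridiag_eigenvalue_def add.commute)

section \<open>Concavity of geometric means of affine functions\<close>

text \<open>Lagrange's identity for the vectors \<open>(sqrt(u p1), sqrt(v p2))\<close> and \<open>(sqrt(u q1), sqrt(v q2))\<close>.\<close>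

lemma convex_comb_sqrt_mult_identity:
  fixes p1 q1 p2 q2 u v :: real
  assumes "p1 \<ge> 0" and "q1 \<ge> 0" and "p2 \<ge> 0" and "q2 \<ge> 0"
  shows "(u * sqrt (p1 * q1) + v * sqrt (p2 * q2))\<^sup>2 + u * v * (sqrt (p1 * q2) - sqrt (p2 * q1))\<^sup>2
    = (u * p1 + v * p2) * (u * q1 + v * q2)"
proof -
  define A1 B1 A2 B2 where "A1 = sqrt p1" "B1 = sqrt q1" "A2 = sqrt p2" "B2 = sqrt q2"
  have "p1 = A1\<^sup>2" "q1 = B1\<^sup>2" "p2 = A2\<^sup>2" "q2 = B2\<^sup>2"
    using assms by (simp_all add: A1_B1_A2_B2_def)
  moreover have "sqrt (p1 * q1) = A1 * B1" "sqrt (p2 * q2) = A2 * B2"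
    "sqrt (p1 * q2) = A1 * B2" "sqrt (p2 * q1) = A2 * B1"
    by (simp_all add: A1_B1_A2_B2_def real_sqrt_mult)
  ultimately show ?thesis
    by (simp add: power2_eq_square algebra_simps)
qed

lemma convex_comb_sqrt_mult_le:
  fixes p1 q1 p2 q2 u v :: real
  assumes "p1 \<ge> 0" and "q1 \<ge> 0" and "p2 \<ge> 0" and "q2 \<ge> 0" and "u \<ge> 0" and "v \<ge> 0"
  shows "u * sqrt (p1 * q1) + v * sqrt (p2 * q2) \<le> sqrt ((u * p1 + v * p2) * (u * q1 + v * q2))"
proof (rule real_le_rsqrt)
  have "u * v * (sqrt (p1 * q2) - sqrt (p2 * q1))\<^sup>2 \<ge> 0"
    using assms by simp
  then show "(u * sqrt (p1 * q1) + v * sqrt (p2 * q2))\<^sup>2 \<le> (u * p1 + v * p2) * (u * q1 + v * q2)"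
    using convex_comb_sqrt_mult_identity[OF assms(1-4), of u v] by linarith
qed

lemma convex_comb_sqrt_mult_less:
  fixes p1 q1 p2 q2 u v :: real
  assumes "p1 \<ge> 0" and "q1 \<ge> 0" and "p2 \<ge> 0" and "q2 \<ge> 0" and "u > 0" and "v > 0"
    and "p1 * q2 \<noteq> p2 * q1"
  shows "u * sqrt (p1 * q1) + v * sqrt (p2 * q2) < sqrt ((u * p1 + v * p2) * (u * q1 + v * q2))"
proof (rule real_less_rsqrt)
  have "sqrt (p1 * q2) \<noteq> sqrt (p2 * q1)"
    using assms(7) by simp
  then have "u * v * (sqrt (p1 * q2) - sqrt (p2 * q1))\<^sup>2 > 0"
    using assms(5,6) by simp
  then show "(u * sqrt (p1 * q1) + v * sqrt (p2 * q2))\<^sup>2 < (u * p1 + v * p2) * (u * q1 + v * q2)"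
    using convex_comb_sqrt_mult_identity[OF assms(1-4), of u v] by linarith
qed

lemma concave_on_sqrt_mult_affine:
  fixes S :: "real set" and p0 p1 q0 q1 :: real
  assumes "convex S" and nonneg: "\<And>t. t \<in> S \<Longrightarrow> p0 + p1 * t \<ge> 0 \<and> q0 + q1 * t \<ge> 0"
  shows "concave_on S (\<lambda>t. sqrt ((p0 + p1 * t) * (q0 + q1 * t)))"
proof (rule concave_on_linorderI[OF _ assms(1)])
  fix u x y :: real
  assume "0 < u" and "u < 1" and "x \<in> S" and "y \<in> S"
  have "p0 + p1 * ((1 - u) * x + u * y) = (1 - u) * (p0 + p1 * x) + u * (p0 + p1 * y)"
    "q0 + q1 * ((1 - u) * x + u * y) = (1 - u) * (q0 + q1 * x) + u * (q0 + q1 * y)"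
    by (simp_all add: algebra_simps)
  then show "(1 - u) * sqrt ((p0 + p1 * x) * (q0 + q1 * x)) + u * sqrt ((p0 + p1 * y) * (q0 + q1 * y))
      \<le> sqrt ((p0 + p1 * ((1 - u) *\<^sub>R x + u *\<^sub>R y)) * (q0 + q1 * ((1 - u) *\<^sub>R x + u *\<^sub>R y)))"
    using nonneg \<open>x \<in> S\<close> \<open>y \<in> S\<close> \<open>0 < u\<close> \<open>u < 1\<close>
    by (simp add: convex_comb_sqrt_mult_le)
qed

lemma strictly_concave_on_sqrt_mult_affine:
  fixes S :: "real set" and p0 p1 q0 q1 :: real
  assumes "convex S" and nonneg: "\<And>t. t \<in> S \<Longrightarrow> p0 + p1 * t \<ge> 0 \<and> q0 + q1 * t \<ge> 0"
    and "p1 * q0 \<noteq> p0 * q1"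
  shows "strictly_concave_on S (\<lambda>t. sqrt ((p0 + p1 * t) * (q0 + q1 * t)))"
  unfolding strictly_concave_on_def
proof (intro conjI assms(1) ballI allI impI)
  fix x y u :: real
  assume "x \<in> S" and "y \<in> S" and "x \<noteq> y" and u: "0 < u \<and> u < 1"
  have "(p0 + p1 * x) * (q0 + q1 * y) - (p0 + p1 * y) * (q0 + q1 * x) = (x - y) * (p1 * q0 - p0 * q1)"
    by (simp add: algebra_simps)
  then have "(p0 + p1 * x) * (q0 + q1 * y) \<noteq> (p0 + p1 * y) * (q0 + q1 * x)"
    using \<open>x \<noteq> y\<close> assms(3) by auto
  moreover have "p0 + p1 * ((1 - u) * x + u * y) = (1 - u) * (p0 + p1 * x) + u * (p0 + p1 * y)"
    "q0 + q1 * ((1 - u) * x + u * y) = (1 - u) * (q0 + q1 * x) + u * (q0 + q1 * y)"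
    by (simp_all add: algebra_simps)
  ultimately show "(1 - u) * sqrt ((p0 + p1 * x) * (q0 + q1 * x)) + u * sqrt ((p0 + p1 * y) * (q0 + q1 * y))
      < sqrt ((p0 + p1 * ((1 - u) * x + u * y)) * (q0 + q1 * ((1 - u) * x + u * y)))"
    using nonneg \<open>x \<in> S\<close> \<open>y \<in> S\<close> u by (simp add: convex_comb_sqrt_mult_less)
qed

lemma concave_on_cong:
  assumes "concave_on S f" and "\<And>x. x \<in> S \<Longrightarrow> g x = f x"
  shows "concave_on S g"
  using assms unfolding concave_on_iff by (auto simp: convex_def)

lemma strictly_concave_on_cong:
  fixes S :: "real set"
  assumes "strictly_concave_on S f" and "\<And>x. x \<in> S \<Longrightarrow> g x = f x"
  shows "strictly_concave_on S g"
proof -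
  have "(1 - u) * x + u * y \<in> S" if "convex S" "x \<in> S" "y \<in> S" "0 < u \<and> u < 1"
    for x y u :: real
    using that convexD[of S x y "1 - u" u] by simp
  then show ?thesis
    using assms unfolding strictly_concave_on_def by auto
qed

lemma strictly_concave_on_add_cmul:
  fixes S :: "real set"
  assumes "K > 0" and "strictly_concave_on S g"
  shows "strictly_concave_on S (\<lambda>t. b + K * g t)"
  unfolding strictly_concave_on_def
proof (intro conjI ballI allI impI)
  show "convex S" using assms(2) by (simp add: strictly_concave_on_def)
  fix x y u :: real
  assume "x \<in> S" and "y \<in> S" and "x \<noteq> y" and "0 < u \<and> u < 1"
  then have "(1 - u) * g x + u * g y < g ((1 - u) * x + u * y)"
    using assms(2) unfolding strictly_concave_on_def by blast
  then have "K * ((1 - u) * g x + u * g y) < K * g ((1 - u) * x + u * y)"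
    using assms(1) by simp
  then show "(1 - u) * (b + K * g x) + u * (b + K * g y) < b + K * g ((1 - u) * x + u * y)"
    by (simp add: algebra_simps)
qed

section \<open>Monotonicity of symmetric concave functions\<close>

lemma strictly_concave_on_gt_min:
  fixes f :: "real \<Rightarrow> real"
  assumes "strictly_concave_on S f" and "x \<in> S" and "z \<in> S" and "x < y" and "y < z"
  shows "min (f x) (f z) < f y"
proof -
  define u where "u = (y - x) / (z - x)"
  have "u * (z - x) = y - x"
    using assms(4,5) by (simp add: u_def)
  then have y: "y = (1 - u) * x + u * z"
    by (simp add: algebra_simps)
  have u: "0 < u \<and> u < 1"
    using assms(4,5) by (simp add: u_def)
  have "(1 - u) * min (f x) (f z) + u * min (f x) (f z) \<le> (1 - u) * f x + u * f z"
    using u by (intro add_mono mult_left_mono) auto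
  then have "min (f x) (f z) \<le> (1 - u) * f x + u * f z"
    by (simp add: algebra_simps)
  also have "\<dots> < f y"
    using assms(1-5) u unfolding y strictly_concave_on_def by auto
  finally show ?thesis .
qed

lemma concave_on_symmetric_monotone:
  fixes f :: "real \<Rightarrow> real"
  assumes "concave_on {a<..<b} f" and sym: "\<And>t. t \<in> {a<..<b} \<Longrightarrow> f (a + b - t) = f t"
  shows "monotone_on {a<..<(a + b) / 2} (\<le>) (\<le>) f"
    and "monotone_on {(a + b) / 2<..<b} (\<le>) (\<ge>) f"
proof -
  have ge_min: "min (f x) (f z) \<le> f y" if "x \<in> {a<..<b}" "z \<in> {a<..<b}" "x \<le> y" "y \<le> z" for x y z
  proof -
    have "{x..z} \<subseteq> {a<..<b}"
      using that by auto
    then have "concave_on {x..z} f"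
      using assms(1) unfolding concave_on_def by (metis convex_on_subset convex_real_interval(5))
    then show ?thesis using that concave_on_ge_min by auto
  qed
  \<comment> \<open>Left of the midpoint, \<open>y\<close> lies between \<open>x\<close> and its mirror image \<open>a + b - x\<close>.\<close>
  show "monotone_on {a<..<(a + b) / 2} (\<le>) (\<le>) f"
  proof (rule monotone_onI)
    fix x y assume "x \<in> {a<..<(a + b) / 2}" "y \<in> {a<..<(a + b) / 2}" "x \<le> y"
    then show "f x \<le> f y"
      using ge_min[of x "a + b - x" y] sym[of x] by auto
  qed
  show "monotone_on {(a + b) / 2<..<b} (\<le>) (\<ge>) f"
  proof (rule monotone_onI)
    fix x y assume "x \<in> {(a + b) / 2<..<b}" "y \<in> {(a + b) / 2<..<b}" "x \<le> y"
    then show "f y \<le> f x"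
      using ge_min[of "a + b - y" y x] sym[of y] by auto
  qed
qed

lemma strictly_concave_on_symmetric_strict_mono:
  fixes f :: "real \<Rightarrow> real"
  assumes "strictly_concave_on {a<..<b} f" and sym: "\<And>t. t \<in> {a<..<b} \<Longrightarrow> f (a + b - t) = f t"
  shows "monotone_on {a<..<(a + b) / 2} (<) (<) f"
    and "monotone_on {(a + b) / 2<..<b} (<) (>) f"
proof -
  show "monotone_on {a<..<(a + b) / 2} (<) (<) f"
  proof (rule monotone_onI)
    fix x y assume "x \<in> {a<..<(a + b) / 2}" "y \<in> {a<..<(a + b) / 2}" "x < y"
    then show "f x < f y"
      using strictly_concave_on_gt_min[OF assms(1), of x "a + b - x" y] sym[of x] by auto
  qed
  show "monotone_on {(a + b) / 2<..<b} (<) (>) f"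
  proof (rule monotone_onI)
    fix x y assume "x \<in> {(a + b) / 2<..<b}" "y \<in> {(a + b) / 2<..<b}" "x < y"
    then show "f y < f x"
      using strictly_concave_on_gt_min[OF assms(1), of "a + b - y" y x] sym[of y] by auto
  qed
qed

theorem theorem2:
  fixes n :: nat and a b c :: real and r :: "real \<Rightarrow> real"
  assumes "n \<ge> 2" and "a \<ge> 0" and "b \<ge> 0" and "c \<ge> 0" and "max a c > 0"
    and "\<And>t. r t = real_spectral_radius
           ((1 - t) \<cdot>\<^sub>m tridiag_toeplitz n a b c + t \<cdot>\<^sub>m (tridiag_toeplitz n a b c)\<^sup>T)"
  shows "concave_on {0<..<1} r
    \<and> monotone_on {0<..<1/2} (\<le>) (\<le>) r
    \<and> monotone_on {1/2<..<1} (\<le>) (\<ge>) r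
    \<and> (a \<noteq> c \<longrightarrow>
         strictly_concave_on {0<..<1} r
       \<and> monotone_on {0<..<1/2} (<) (<) r
       \<and> monotone_on {1/2<..<1} (<) (>) r)"
proof -
  define K where "K = 2 * cos (pi / real (n + 1))"
  define g where "g t = sqrt ((a + (c - a) * t) * (c + (a - c) * t))" for t
  have "a + c > 0" using assms(2,4,5) by (simp add: max_def split: if_splits)
  then have r_eq: "r t = b + K * g t" if "t \<in> {0<..<1}" for t
    using real_spectral_radius_convex_comb_transpose[of n a b c t] assms that
    by (simp add: K_def g_def)
  have "K > 0" using cos_pi_div_Suc_pos[OF assms(1)] by (simp add: K_def)
  have nonneg: "0 \<le> a + (c - a) * t \<and> 0 \<le> c + (a - c) * t" if "t \<in> {0<..<1}" for t
    using convex_comb_pos[of a c t] convex_comb_pos[of c a t] assms(2,4) \<open>a + c > 0\<close> that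
    by (simp add: add.commute)
  have "concave_on {0<..<1} r"
    using concave_on_sqrt_mult_affine[OF convex_real_interval(8) nonneg] \<open>K > 0\<close>
    by (intro concave_on_cong[OF _ r_eq] concave_on_add concave_on_cmul)
      (simp_all add: g_def concave_on_const convex_real_interval)
  moreover have "r (0 + 1 - t) = r t" if "t \<in> {0<..<1}" for t
    using r_eq[OF that] r_eq[of "1 - t"] that by (simp add: g_def algebra_simps)
  moreover have "strictly_concave_on {0<..<1} r" if "a \<noteq> c"
  proof -
    have "(c - a) * c - a * (a - c) = (c - a) * (a + c)"
      by (simp add: algebra_simps)
    then have "(c - a) * c \<noteq> a * (a - c)"
      using that \<open>a + c > 0\<close> by auto
    then show ?thesis
      using strictly_concave_on_sqrt_mult_affine[OF convex_real_interval(8) nonneg] \<open>K > 0\<close>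
      by (intro strictly_concave_on_cong[OF _ r_eq] strictly_concave_on_add_cmul) (simp_all add: g_def)
  qed
  ultimately show ?thesis
    using concave_on_symmetric_monotone[of 0 1 r] strictly_concave_on_symmetric_strict_mono[of 0 1 r]
    by simp
qed

end
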